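(* For $0<|q|<1$, the sequences $$\alpha_n=\frac{(-1)^nq^{-2n}(1-q^{4n+2})}{1-q^2},\qquad\beta_n=\frac{(-1)^nq^{-2n}}{(-q;q)_n(q;q)_n}\qquad(n\ge0)$$ form a Bailey pair relative to $a=q$, i.e. $\beta_n=\sum_{r=0}^n\frac{\alpha_r}{(q;q)_{n-r}(q^2;q)_{n+r}}$ for all $n\ge0$.
   Context: $(a;q)_n=\prod_{k=0}^{n-1}(1-aq^k)$ with $(a;q)_0=1$. A Bailey pair relative to $a$ is a pair of sequences with $\beta_n=\sum_{r=0}^n\frac{\alpha_r}{(q;q)_{n-r}(aq;q)_{n+r}}$ for all $n\ge0$. *)

theory Defs
  imports Complex_Main
begin

definition qpoch :: "complex \<Rightarrow> complex \<Rightarrow> nat \<Rightarrow> complex" where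
  "qpoch a q n = (\<Prod>k<n. 1 - a * q ^ k)"

definition bailey_pair :: "complex \<Rightarrow> complex \<Rightarrow> (nat \<Rightarrow> complex) \<Rightarrow> (nat \<Rightarrow> complex) \<Rightarrow> bool" where
  "bailey_pair q a \<alpha> \<beta> \<longleftrightarrow>
     (\<forall>n. \<beta> n = (\<Sum>r=0..n. \<alpha> r / (qpoch q q (n - r) * qpoch (a * q) q (n + r))))"

end

(*
  Put x = -q^2, so that 1 - q^(4r+2) = 1 + x^(2r+1). Then the r-th term of the Bailey sum is
  x^(-n)/(1+q) times the sum of the terms k = n - r and k = n + r + 1 of
  G_(2n+1)(x) = sum_k x^k / ((q;q)_k (q;q)_(2n+1-k)), the Rogers-Szego polynomial divided by
  (q;q)_(2n+1). The two q-Pascal recurrences for G_N, together with the reflection symmetry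
  k <-> N - k, give G_N(-1) = 0 for odd N and G_(2m)(-1) = 1/(q^2;q^2)_m, and from these
  G_(2n+1)(-q^2) = (1+q)/(q^2;q^2)_n = (1+q)/((-q;q)_n (q;q)_n).
*)
theory Submission
  imports Defs
begin

lemma qpoch_Suc: "qpoch a q (Suc n) = qpoch a q n * (1 - a * q ^ n)"
  by (simp add: qpoch_def)

lemma qpoch_Suc_shift: "qpoch a q (Suc n) = (1 - a) * qpoch (a * q) q n"
  unfolding qpoch_def prod.lessThan_Suc_shift by (simp add: mult.assoc)

lemma qpoch_nonzero:
  assumes "norm a < 1" "norm q \<le> 1"
  shows "qpoch a q n \<noteq> 0"
proof -
  have "norm (a * q ^ k) < 1" for k
  proof -
    have "norm (a * q ^ k) = norm a * norm q ^ k" by (simp add: norm_mult norm_power)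
    also have "\<dots> \<le> norm a" using assms by (simp add: mult_left_le power_le_one)
    finally show ?thesis using assms(1) by linarith
  qed
  then have "a * q ^ k \<noteq> 1" for k by (metis norm_one order_less_irrefl)
  then show ?thesis by (simp add: qpoch_def prod_zero_iff)
qed

lemma one_minus_power_nonzero:
  fixes q :: complex
  assumes "norm q < 1" "0 < n"
  shows "1 - q ^ n \<noteq> 0"
  using assms power_eq_1_iff by fastforce

lemma qpoch_squares_nonzero:
  fixes q :: complex
  assumes "norm q < 1"
  shows "qpoch (q ^ 2) (q ^ 2) n \<noteq> 0"
  using assms by (intro qpoch_nonzero) (simp_all add: norm_power power_less_one_iff power_le_one)

definition rogers_szego :: "complex \<Rightarrow> nat \<Rightarrow> complex \<Rightarrow> complex" where
  "rogers_szego q N x = (\<Sum>k=0..N. x ^ k / (qpoch q q k * qpoch q q (N - k)))"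

lemma sum_qbinom_shift_lower:
  assumes "norm q < 1"
  shows "(\<Sum>k=0..Suc N. c k * (1 - q ^ k) / (qpoch q q k * qpoch q q (Suc N - k)))
       = (\<Sum>k=0..N. c (Suc k) / (qpoch q q k * qpoch q q (N - k)))"
proof -
  have "c (Suc k) * (1 - q ^ Suc k) / (qpoch q q (Suc k) * qpoch q q (N - k))
      = c (Suc k) / (qpoch q q k * qpoch q q (N - k))" for k
    using one_minus_power_nonzero[OF assms, of "Suc k"] by (simp add: qpoch_Suc mult_ac)
  then show ?thesis by (simp add: sum.atLeast0_atMost_Suc_shift del: sum.cl_ivl_Suc)
qed

lemma sum_qbinom_shift_upper:
  assumes "norm q < 1"
  shows "(\<Sum>k=0..Suc N. c k * (1 - q ^ (Suc N - k)) / (qpoch q q k * qpoch q q (Suc N - k)))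
       = (\<Sum>k=0..N. c k / (qpoch q q k * qpoch q q (N - k)))"
proof -
  have "c k * (1 - q ^ (Suc N - k)) / (qpoch q q k * qpoch q q (Suc N - k))
      = c k / (qpoch q q k * qpoch q q (N - k))" if "k \<le> N" for k
  proof -
    have "Suc N - k = Suc (N - k)" using that by simp
    then show ?thesis
      using one_minus_power_nonzero[OF assms, of "Suc (N - k)"] by (simp add: qpoch_Suc mult_ac)
  qed
  then show ?thesis by (simp add: sum.atLeast0_atMost_Suc)
qed

lemma rogers_szego_recurrence:
  assumes "norm q < 1"
  shows "(1 - q ^ Suc N) * rogers_szego q (Suc N) x
       = rogers_szego q N (q * x) + x * rogers_szego q N x"
proof -
  have split: "(1 - q ^ Suc N) * (x ^ k / (qpoch q q k * qpoch q q (Suc N - k)))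
      = x ^ k * (1 - q ^ k) / (qpoch q q k * qpoch q q (Suc N - k))
      + (q * x) ^ k * (1 - q ^ (Suc N - k)) / (qpoch q q k * qpoch q q (Suc N - k))"
    if "k \<le> Suc N" for k
  proof -
    have "q ^ k * q ^ (Suc N - k) = q ^ Suc N" using that by (simp flip: power_add)
    then have "1 - q ^ Suc N = (1 - q ^ k) + q ^ k * (1 - q ^ (Suc N - k))"
      by (simp add: algebra_simps)
    then show ?thesis by (simp only:) (simp add: divide_inverse power_mult_distrib algebra_simps)
  qed
  have "(1 - q ^ Suc N) * rogers_szego q (Suc N) x
      = (\<Sum>k=0..Suc N. x ^ k * (1 - q ^ k) / (qpoch q q k * qpoch q q (Suc N - k)))
      + (\<Sum>k=0..Suc N. (q * x) ^ k * (1 - q ^ (Suc N - k))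
                         / (qpoch q q k * qpoch q q (Suc N - k)))"
    unfolding rogers_szego_def sum_distrib_left sum.distrib[symmetric]
    by (intro sum.cong refl split) simp
  also have "\<dots> = x * rogers_szego q N x + rogers_szego q N (q * x)"
    unfolding sum_qbinom_shift_lower[OF assms] sum_qbinom_shift_upper[OF assms]
    by (simp add: rogers_szego_def sum_distrib_left mult.assoc)
  finally show ?thesis by simp
qed

lemma rogers_szego_recurrence_dual:
  assumes "norm q < 1"
  shows "(1 - q ^ Suc N) * rogers_szego q (Suc N) (q * x)
       = rogers_szego q N (q * x) + q ^ Suc N * x * rogers_szego q N x"
proof -
  have split: "(1 - q ^ Suc N) * ((q * x) ^ k / (qpoch q q k * qpoch q q (Suc N - k)))
      = (q * x) ^ k * q ^ (Suc N - k) * (1 - q ^ k) / (qpoch q q k * qpoch q q (Suc N - k))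
      + (q * x) ^ k * (1 - q ^ (Suc N - k)) / (qpoch q q k * qpoch q q (Suc N - k))"
    if "k \<le> Suc N" for k
  proof -
    have "q ^ k * q ^ (Suc N - k) = q ^ Suc N" using that by (simp flip: power_add)
    then have "1 - q ^ Suc N = q ^ (Suc N - k) * (1 - q ^ k) + (1 - q ^ (Suc N - k))"
      by (simp add: algebra_simps)
    then show ?thesis by (simp only:) (simp add: divide_inverse algebra_simps)
  qed
  have shifted: "(q * x) ^ Suc k * q ^ (Suc N - Suc k) / (qpoch q q k * qpoch q q (N - k))
      = q ^ Suc N * x * (x ^ k / (qpoch q q k * qpoch q q (N - k)))" if "k \<in> {0..N}" for k
  proof -
    have "q ^ k * q ^ (N - k) = q ^ N" using that by (simp flip: power_add)
    then show ?thesis by (simp add: power_mult_distrib algebra_simps)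
  qed
  have "(1 - q ^ Suc N) * rogers_szego q (Suc N) (q * x)
      = (\<Sum>k=0..Suc N. (q * x) ^ k * q ^ (Suc N - k) * (1 - q ^ k)
                         / (qpoch q q k * qpoch q q (Suc N - k)))
      + (\<Sum>k=0..Suc N. (q * x) ^ k * (1 - q ^ (Suc N - k))
                         / (qpoch q q k * qpoch q q (Suc N - k)))"
    unfolding rogers_szego_def sum_distrib_left sum.distrib[symmetric]
    by (intro sum.cong refl split) simp
  also have "\<dots> = q ^ Suc N * x * rogers_szego q N x + rogers_szego q N (q * x)"
    unfolding sum_qbinom_shift_lower[OF assms] sum_qbinom_shift_upper[OF assms]
      rogers_szego_def sum_distrib_left
    by (intro arg_cong2[where f="(+)"] sum.cong refl shifted)
  finally show ?thesis by simp
qed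

lemma rogers_szego_reflect:
  "rogers_szego q N x = (\<Sum>k=0..N. x ^ (N - k) / (qpoch q q k * qpoch q q (N - k)))"
  unfolding rogers_szego_def by (subst sum.atLeastAtMost_rev) (simp add: mult.commute)

lemma qpoch_minus_mult: "qpoch (- a) q n * qpoch a q n = qpoch (a ^ 2) (q ^ 2) n"
  by (induction n)
    (simp_all add: qpoch_def power2_eq_square power_mult_distrib algebra_simps flip: power_add)

lemma rogers_szego_minus_one_odd:
  assumes "odd N"
  shows "rogers_szego q N (-1) = 0"
proof -
  have "(-1::complex) ^ (N - k) = - ((-1) ^ k)" if "k \<le> N" for k
    using that assms by (auto simp: minus_one_power_iff)
  then have "rogers_szego q N (-1) = - rogers_szego q N (-1)"
    by (subst rogers_szego_reflect) (simp add: rogers_szego_def sum_negf flip: sum_negf)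
  then show ?thesis by simp
qed

lemma rogers_szego_minus_one_even:
  assumes "norm q < 1"
  shows "rogers_szego q (2 * m) (-1) = 1 / qpoch (q ^ 2) (q ^ 2) m"
proof (induction m)
  case 0
  then show ?case by (simp add: rogers_szego_def qpoch_def)
next
  case (Suc m)
  let ?G = "rogers_szego q"
  have odd_vanishes: "?G (Suc (2 * m)) (-1) = 0"
    by (simp add: rogers_szego_minus_one_odd)
  have "?G (2 * m) (-q) = ?G (2 * m) (-1)"
    using rogers_szego_recurrence[OF assms, of "2 * m" "-1"] odd_vanishes by simp
  then have "(1 - q ^ Suc (2 * m)) * ?G (Suc (2 * m)) (-q)
      = (1 - q ^ Suc (2 * m)) * ?G (2 * m) (-1)"
    using rogers_szego_recurrence_dual[OF assms, of "2 * m" "-1"] by (simp add: algebra_simps)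
  then have "?G (Suc (2 * m)) (-q) = ?G (2 * m) (-1)"
    using one_minus_power_nonzero[OF assms, of "Suc (2 * m)"] by simp
  moreover have pow: "(q ^ 2) ^ Suc m = q ^ Suc (Suc (2 * m))"
    by (simp add: power_mult power2_eq_square)
  ultimately have "(1 - (q ^ 2) ^ Suc m) * ?G (2 * Suc m) (-1) = 1 / qpoch (q ^ 2) (q ^ 2) m"
    using rogers_szego_recurrence[OF assms, of "Suc (2 * m)" "-1"] odd_vanishes Suc.IH by simp
  moreover have "1 - (q ^ 2) ^ Suc m \<noteq> 0"
    unfolding pow by (rule one_minus_power_nonzero[OF assms]) simp
  ultimately show ?case
    using qpoch_squares_nonzero[OF assms, of m] by (simp add: qpoch_Suc field_simps)
qed

lemma rogers_szego_odd_minus_q_squared: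
  assumes "norm q < 1"
  shows "rogers_szego q (Suc (2 * n)) (- (q ^ 2)) = (1 + q) / qpoch (q ^ 2) (q ^ 2) n"
proof -
  let ?G = "rogers_szego q" and ?N = "Suc (2 * n)"
  let ?c = "1 - q ^ Suc ?N"
  have rec_q: "?c * ?G (Suc ?N) (-q) = ?G ?N (- (q ^ 2)) - q * ?G ?N (-q)"
    using rogers_szego_recurrence[OF assms, of ?N "-q"] by (simp add: power2_eq_square)
  have rec_1: "?c * ?G (Suc ?N) (-1) = ?G ?N (-q)"
    using rogers_szego_recurrence[OF assms, of ?N "-1"] by (simp add: rogers_szego_minus_one_odd)
  have "?G (Suc ?N) (-q) = ?G (Suc ?N) (-1)"
    using rogers_szego_recurrence[OF assms, of "Suc ?N" "-1"]
    by (simp add: rogers_szego_minus_one_odd)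
  then have "?G ?N (- (q ^ 2)) = ?c * ?G (Suc ?N) (-1) + q * ?G ?N (-q)"
    using rec_q by (simp add: algebra_simps)
  also have "\<dots> = (1 + q) * ?G ?N (-q)"
    unfolding rec_1 by (simp add: algebra_simps)
  finally have "?G ?N (- (q ^ 2)) = (1 + q) * ?G ?N (-q)" .
  moreover have "?G ?N (-q) = 1 / qpoch (q ^ 2) (q ^ 2) n"
  proof -
    have "(q ^ 2) ^ Suc n = q ^ Suc ?N"
      by (simp add: power_mult power2_eq_square)
    moreover have "?c \<noteq> 0"
      by (rule one_minus_power_nonzero[OF assms]) simp
    ultimately show ?thesis
      using rogers_szego_minus_one_even[OF assms, of "Suc n"] qpoch_squares_nonzero[OF assms, of n]
      by (simp add: qpoch_Suc flip: rec_1)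
  qed
  ultimately show ?thesis by simp
qed

lemma sum_pair_reflect:
  fixes T :: "nat \<Rightarrow> 'a::comm_monoid_add"
  shows "(\<Sum>r=0..n. T (n - r) + T (n + Suc r)) = (\<Sum>k=0..Suc (2 * n). T k)"
proof -
  have "(\<Sum>r=0..n. T (n - r)) = (\<Sum>k=0..n. T k)"
    using sum.atLeastAtMost_rev[of T 0 n] by simp
  moreover have "(\<Sum>r=0..n. T (n + Suc r)) = (\<Sum>k=Suc n..Suc (2 * n). T k)"
    using sum.shift_bounds_cl_nat_ivl[of T 0 "Suc n" n] by (simp add: mult_2 add.commute)
  moreover have "(\<Sum>k=0..Suc (2 * n). T k)
      = (\<Sum>k=0..n. T k) + (\<Sum>k=Suc n..Suc (2 * n). T k)"
    using sum.ub_add_nat[of 0 n T "Suc n"] by (simp add: mult_2)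
  ultimately show ?thesis by (simp add: sum.distrib)
qed

lemma bailey_sum_eq_rogers_szego:
  fixes q x :: complex
  assumes "norm q < 1" "x \<noteq> 0"
  shows "(\<Sum>r=0..n. inverse (x ^ r) * (1 + x ^ (2 * r + 1)) / (1 - q ^ 2)
                    / (qpoch q q (n - r) * qpoch (q * q) q (n + r)))
       = inverse (x ^ n) / (1 + q) * rogers_szego q (Suc (2 * n)) x"
proof -
  define T where "T k = x ^ k / (qpoch q q k * qpoch q q (Suc (2 * n) - k))" for k
  have "inverse (x ^ r) * (1 + x ^ (2 * r + 1)) / (1 - q ^ 2)
          / (qpoch q q (n - r) * qpoch (q * q) q (n + r))
      = inverse (x ^ n) / (1 + q) * (T (n - r) + T (n + Suc r))" if "r \<le> n" for r
  proof -
    obtain d where n: "n = r + d" using \<open>r \<le> n\<close> le_Suc_ex by blast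
    let ?A = "qpoch q q d" and ?B = "qpoch q q (Suc (2 * r + d))"
    have "1 - q \<noteq> 0" "1 + q \<noteq> 0"
      using assms(1) by (auto simp: add_eq_0_iff)
    have "?A \<noteq> 0" "?B \<noteq> 0"
      using assms(1) by (simp_all add: qpoch_nonzero)
    have "n + r = 2 * r + d" using n by simp
    then have "qpoch (q * q) q (n + r) = ?B / (1 - q)"
      using \<open>1 - q \<noteq> 0\<close> by (simp only:) (simp add: qpoch_Suc_shift)
    moreover have "1 - q ^ 2 = (1 - q) * (1 + q)"
      by (simp add: algebra_simps power2_eq_square)
    ultimately have "inverse (x ^ r) * (1 + x ^ (2 * r + 1)) / (1 - q ^ 2)
          / (qpoch q q (n - r) * qpoch (q * q) q (n + r))
        = inverse (x ^ r) * (1 + x ^ (2 * r + 1)) / (1 + q) / (?A * ?B)"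
      using \<open>1 - q \<noteq> 0\<close> by (simp add: n)
    also have "\<dots> = inverse (x ^ (r + d)) / (1 + q)
        * (x ^ d / (?A * ?B) + x ^ (Suc (2 * r + d)) / (?B * ?A))"
    proof -
      have "inverse (x ^ (r + d)) * (x ^ d + x ^ (Suc (2 * r + d)))
          = inverse (x ^ r) * (1 + x ^ (2 * r + 1))"
        using assms(2) by (simp add: power_add field_simps)
      then show ?thesis by (simp add: add_divide_distrib[symmetric] mult.commute[of ?B])
    qed
    also have "\<dots> = inverse (x ^ n) / (1 + q) * (T (n - r) + T (n + Suc r))"
    proof -
      have idx: "n - r = d" "n + Suc r = Suc (2 * r + d)"
        "Suc (2 * n) - d = Suc (2 * r + d)" "Suc (2 * n) - Suc (2 * r + d) = d"
        using n by simp_all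
      show ?thesis unfolding T_def idx unfolding n ..
    qed
    finally show ?thesis .
  qed
  then have "(\<Sum>r=0..n. inverse (x ^ r) * (1 + x ^ (2 * r + 1)) / (1 - q ^ 2)
                    / (qpoch q q (n - r) * qpoch (q * q) q (n + r)))
      = inverse (x ^ n) / (1 + q) * (\<Sum>r=0..n. T (n - r) + T (n + Suc r))"
    by (simp add: sum_distrib_left)
  also have "\<dots> = inverse (x ^ n) / (1 + q) * rogers_szego q (Suc (2 * n)) x"
    unfolding sum_pair_reflect[of T] unfolding rogers_szego_def T_def ..
  finally show ?thesis .
qed

lemma neg_one_power_mult_power_int:
  fixes q :: "'a::field"
  shows "(-1) ^ n * q powi (- 2 * int n) = inverse ((- (q ^ 2)) ^ n)"
proof -
  have "- 2 * int n = - int (2 * n)" by simp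
  then have "q powi (- 2 * int n) = inverse ((q ^ 2) ^ n)"
    by (simp only: power_int_minus power_int_of_nat power_mult)
  then show ?thesis
    by (simp add: power_minus[of "q ^ 2"] inverse_mult_distrib flip: power_inverse)
qed

theorem mainTheorem13:
  fixes q :: complex
  assumes "0 < norm q" and "norm q < 1"
  shows "bailey_pair q q
           (\<lambda>n. (-1) ^ n * q powi (- 2 * int n) * (1 - q ^ (4 * n + 2)) / (1 - q ^ 2))
           (\<lambda>n. (-1) ^ n * q powi (- 2 * int n) / (qpoch (- q) q n * qpoch q q n))"
  unfolding bailey_pair_def
proof
  fix n
  let ?x = "- (q ^ 2)"
  have "?x \<noteq> 0" "1 + q \<noteq> 0"
    using assms by (auto simp: add_eq_0_iff)
  have "1 - q ^ (4 * r + 2) = 1 + ?x ^ (2 * r + 1)" for r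
  proof -
    have "q ^ (4 * r + 2) = (q ^ 2) ^ (2 * r + 1)"
      unfolding power_mult[symmetric] by (simp add: algebra_simps)
    then show ?thesis by simp
  qed
  then have "(\<Sum>r=0..n. (-1) ^ r * q powi (- 2 * int r) * (1 - q ^ (4 * r + 2)) / (1 - q ^ 2)
                    / (qpoch q q (n - r) * qpoch (q * q) q (n + r)))
      = inverse (?x ^ n) / (1 + q) * rogers_szego q (Suc (2 * n)) ?x"
    using bailey_sum_eq_rogers_szego[OF assms(2) \<open>?x \<noteq> 0\<close>]
    by (simp only: neg_one_power_mult_power_int)
  also have "\<dots> = inverse (?x ^ n) / (qpoch (- q) q n * qpoch q q n)"
    using \<open>1 + q \<noteq> 0\<close>
    by (simp add: rogers_szego_odd_minus_q_squared[OF assms(2)] qpoch_minus_mult)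
  finally show "(-1) ^ n * q powi (- 2 * int n) / (qpoch (- q) q n * qpoch q q n)
      = (\<Sum>r=0..n. (-1) ^ r * q powi (- 2 * int r) * (1 - q ^ (4 * r + 2)) / (1 - q ^ 2)
                    / (qpoch q q (n - r) * qpoch (q * q) q (n + r)))"
    by (simp only: neg_one_power_mult_power_int)
qed

end
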